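(* Let $X$ be a set strongly star Lindelöf space and $Y$ a compact space such that $X\times Y$ is $T_1$. Then $X\times Y$ is set strongly star Lindelöf.
   Context: For a family $\mathcal U$ of subsets of $Z$ and $A\subseteq Z$, $st(A,\mathcal U)=\bigcup\{U\in\mathcal U: U\cap A\neq\emptyset\}$. A space $Z$ is set strongly star Lindelöf if for every nonempty $A\subseteq Z$ and every family $\mathcal U$ of open subsets of $Z$ with $\overline A\subseteq\bigcup\mathcal U$ there is a countable $F\subseteq\overline A$ with $A\subseteq st(F,\mathcal U)$. *)

theory Defs
  imports "HOL-Analysis.Analysis"
begin

definition star_of :: "'a set \<Rightarrow> 'a set set \<Rightarrow> 'a set" where
  "star_of A \<U> = \<Union>{U \<in> \<U>. U \<inter> A \<noteq> {}}"

definition set_strongly_star_lindelof :: "'a topology \<Rightarrow> bool" where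
  "set_strongly_star_lindelof Z \<longleftrightarrow>
     (\<forall>A \<U>. A \<noteq> {} \<and> A \<subseteq> topspace Z \<and> (\<forall>U\<in>\<U>. openin Z U) \<and> Z closure_of A \<subseteq> \<Union>\<U>
        \<longrightarrow> (\<exists>F. countable F \<and> F \<subseteq> Z closure_of A \<and> A \<subseteq> star_of F \<U>))"

end

theory Submission
  imports Defs
begin

text \<open>
  By Zorn's lemma choose a maximal set \<open>D \<subseteq> closure A\<close> no two points of which lie in a common
  member of \<open>\<U>\<close>; maximality gives \<open>closure A \<subseteq> st(D, \<U>)\<close>. Every member of \<open>\<U>\<close> meets \<open>D\<close> in at
  most one point, so in a \<open>T\<^sub>1\<close> space \<open>D\<close> is closed and discrete, and it remains to see that
  closed discrete subsets of \<open>X \<times> Y\<close> are countable. In \<open>X\<close> this follows by applying the set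
  strong star Lindeloef property to the cover of such a set \<open>S\<close> by the open sets
  \<open>X - (S - {x})\<close>, each of which meets \<open>S\<close> only in \<open>x\<close>. In \<open>X \<times> Y\<close> the projection onto \<open>X\<close> is a
  closed map since \<open>Y\<close> is compact, so it maps a closed discrete set onto one, and the fibres are
  finite because they are closed discrete subsets of compact sets.
\<close>

text \<open>For \<open>S \<subseteq> topspace X\<close>, \<open>X derived_set_of S = {}\<close> says that \<open>S\<close> is closed and discrete.\<close>

definition countable_extent :: "'a topology \<Rightarrow> bool" where
  "countable_extent X \<longleftrightarrow> (\<forall>S. S \<subseteq> topspace X \<and> X derived_set_of S = {} \<longrightarrow> countable S)"

lemma derived_set_of_eq_empty_iff_closedin_subsets:
  assumes "S \<subseteq> topspace X"
  shows "X derived_set_of S = {} \<longleftrightarrow> (\<forall>T \<subseteq> S. closedin X T)"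
proof
  assume empty: "X derived_set_of S = {}"
  show "\<forall>T \<subseteq> S. closedin X T"
  proof (intro allI impI)
    fix T assume "T \<subseteq> S"
    then have "X derived_set_of T = {}"
      using empty derived_set_of_mono by blast
    then show "closedin X T"
      using \<open>T \<subseteq> S\<close> assms by (simp add: closedin_contains_derived_set)
  qed
next
  assume closed: "\<forall>T \<subseteq> S. closedin X T"
  show "X derived_set_of S = {}"
  proof (rule equals0I)
    fix x assume x: "x \<in> X derived_set_of S"
    have "openin X (topspace X - (S - {x}))"
      using closed by (simp add: openin_diff)
    moreover have "x \<in> topspace X - (S - {x})"
      using x derived_set_of_subset_topspace by fastforce
    ultimately obtain y where "y \<noteq> x" "y \<in> S" "y \<in> topspace X - (S - {x})"
      using x unfolding in_derived_set_of by metis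
    then show False
      by blast
  qed
qed

lemma set_strongly_star_lindelof_imp_countable_extent:
  assumes ssl: "set_strongly_star_lindelof X"
  shows "countable_extent X"
  unfolding countable_extent_def
proof (intro allI impI)
  fix S assume S: "S \<subseteq> topspace X \<and> X derived_set_of S = {}"
  show "countable S"
  proof (cases "S = {}")
    case False
    have closed: "closedin X T" if "T \<subseteq> S" for T
      using S that derived_set_of_eq_empty_iff_closedin_subsets by blast
    define V where "V x = topspace X - (S - {x})" for x
    have V_open: "\<forall>U \<in> V ` S. openin X U"
      unfolding V_def using closed by (simp add: openin_diff)
    have S_V: "S \<inter> V x = {x}" if "x \<in> S" for x
      unfolding V_def using S that by blast
    have "X closure_of S = S"
      by (simp add: closed closure_of_eq)
    moreover have "S \<subseteq> \<Union> (V ` S)"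
      using S_V by blast
    ultimately obtain F where F: "countable F" "F \<subseteq> S" "S \<subseteq> star_of F (V ` S)"
      using ssl[unfolded set_strongly_star_lindelof_def, rule_format, of S "V ` S"] False S V_open
      by auto
    have "S \<subseteq> F"
    proof
      fix s assume "s \<in> S"
      then obtain x where x: "x \<in> S" "s \<in> V x" "V x \<inter> F \<noteq> {}"
        using F(3) unfolding star_of_def by blast
      then have "S \<inter> V x = {x}"
        using S_V by blast
      then have "s = x" and "x \<in> F"
        using x F(2) \<open>s \<in> S\<close> by auto
      then show "s \<in> F"
        by simp
    qed
    then show ?thesis
      using F(1) countable_subset by blast
  qed simp
qed

lemma countable_extent_prod_compact:
  assumes X: "countable_extent X" and Y: "compact_space Y"
  shows "countable_extent (prod_topology X Y)"
  unfolding countable_extent_def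
proof (intro allI impI)
  fix E assume E: "E \<subseteq> topspace (prod_topology X Y) \<and> prod_topology X Y derived_set_of E = {}"
  then have E_top: "E \<subseteq> topspace X \<times> topspace Y"
    by simp
  have closed_E: "closedin (prod_topology X Y) E'" if "E' \<subseteq> E" for E'
    using E that derived_set_of_eq_empty_iff_closedin_subsets by blast
  have "closedin X T" if "T \<subseteq> fst ` E" for T
  proof -
    have "T = fst ` (E \<inter> (T \<times> topspace Y))"
      using that E_top by force
    then show ?thesis
      using closed_map_fst[OF Y] closed_E unfolding closed_map_def by (metis inf_le1)
  qed
  moreover have "fst ` E \<subseteq> topspace X"
    using E_top by auto
  ultimately have "X derived_set_of (fst ` E) = {}"
    using derived_set_of_eq_empty_iff_closedin_subsets by blast
  then have "countable (fst ` E)"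
    using X \<open>fst ` E \<subseteq> topspace X\<close> unfolding countable_extent_def by blast
  moreover have "finite (E \<inter> ({x} \<times> topspace Y))" if "x \<in> fst ` E" for x
  proof (rule ccontr)
    assume "infinite (E \<inter> ({x} \<times> topspace Y))"
    moreover have "compactin (prod_topology X Y) ({x} \<times> topspace Y)"
      using that E_top Y by (auto simp: compactin_Times compact_space_def)
    moreover have "prod_topology X Y derived_set_of (E \<inter> ({x} \<times> topspace Y)) = {}"
      using E derived_set_of_mono[of "E \<inter> ({x} \<times> topspace Y)" E] by blast
    ultimately show False
      using compactin_imp_Bolzano_Weierstrass by blast
  qed
  moreover have "E \<subseteq> (\<Union>x \<in> fst ` E. E \<inter> ({x} \<times> topspace Y))"
    using E_top by force
  ultimately show "countable E"
    by (meson countable_UN countable_finite countable_subset)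
qed

lemma separated_subset_star_covering:
  assumes "C \<subseteq> \<Union>\<U>"
  obtains D where "D \<subseteq> C" and "pairwise (\<lambda>d e. \<forall>U \<in> \<U>. \<not> (d \<in> U \<and> e \<in> U)) D"
    and "C \<subseteq> star_of D \<U>"
proof -
  define R where "R d e \<longleftrightarrow> (\<forall>U \<in> \<U>. \<not> (d \<in> U \<and> e \<in> U))" for d e
  define \<D> where "\<D> = {D. D \<subseteq> C \<and> pairwise R D}"
  have "\<Union>\<C> \<in> \<D>" if "\<C> \<in> chains \<D>" for \<C>
    using that pairwise_chain_Union[of \<C> R] unfolding chains_def \<D>_def by blast
  then obtain D where D: "D \<in> \<D>" and maximal: "\<And>D'. D' \<in> \<D> \<Longrightarrow> D \<subseteq> D' \<Longrightarrow> D' = D"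
    using Zorn_Lemma[of \<D>] by blast
  have "c \<in> star_of D \<U>" if c: "c \<in> C" for c
  proof (cases "c \<in> D")
    case True
    then show ?thesis
      using c assms unfolding star_of_def by blast
  next
    case False
    then have "insert c D \<notin> \<D>"
      using maximal by blast
    then obtain d where "d \<in> D" "\<not> R c d \<or> \<not> R d c"
      using c D unfolding \<D>_def by (auto simp: pairwise_insert)
    then show ?thesis
      unfolding R_def star_of_def by blast
  qed
  then show thesis
    using that D unfolding \<D>_def R_def by blast
qed

lemma t1_space_derived_set_of_eq_empty_if_finite_traces:
  assumes "t1_space Z" and "Z closure_of D \<subseteq> \<Union>\<U>"
    and "\<And>U. U \<in> \<U> \<Longrightarrow> openin Z U \<and> finite (D \<inter> U)"
  shows "Z derived_set_of D = {}"
proof (rule equals0I)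
  fix p assume p: "p \<in> Z derived_set_of D"
  then obtain U where U: "U \<in> \<U>" "p \<in> U"
    using derived_set_of_subset_closure_of[of Z D] assms(2) by blast
  have "\<forall>U. p \<in> U \<and> openin Z U \<longrightarrow> infinite (D \<inter> U)"
    using p assms(1) by (simp add: t1_space_derived_set_of_infinite_openin)
  then show False
    using U assms(3) by blast
qed

theorem proposition3p2:
  fixes X :: "'a topology" and Y :: "'b topology"
  assumes "set_strongly_star_lindelof X"
    and "compact_space Y"
    and "t1_space (prod_topology X Y)"
  shows "set_strongly_star_lindelof (prod_topology X Y)"
  unfolding set_strongly_star_lindelof_def
proof (intro allI impI)
  let ?Z = "prod_topology X Y"
  fix A \<U>
  assume "A \<noteq> {} \<and> A \<subseteq> topspace ?Z \<and> (\<forall>U\<in>\<U>. openin ?Z U) \<and> ?Z closure_of A \<subseteq> \<Union>\<U>"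
  then have A: "A \<subseteq> topspace ?Z" and \<U>: "\<forall>U\<in>\<U>. openin ?Z U" "?Z closure_of A \<subseteq> \<Union>\<U>"
    by auto
  obtain D where D: "D \<subseteq> ?Z closure_of A"
    and separated: "pairwise (\<lambda>d e. \<forall>U \<in> \<U>. \<not> (d \<in> U \<and> e \<in> U)) D"
    and star: "?Z closure_of A \<subseteq> star_of D \<U>"
    by (rule separated_subset_star_covering[OF \<U>(2)])
  have "finite (D \<inter> U)" if "U \<in> \<U>" for U
  proof -
    have "D \<inter> U \<subseteq> {d}" if "d \<in> D \<inter> U" for d
      using separated \<open>U \<in> \<U>\<close> that unfolding pairwise_def by blast
    then show ?thesis
      by (metis finite.emptyI finite_insert finite_subset subsetI)
  qed
  moreover have "?Z closure_of D \<subseteq> \<Union>\<U>"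
    using closure_of_mono[OF D, of ?Z] \<U>(2) by simp
  ultimately have "?Z derived_set_of D = {}"
    using assms(3) \<U>(1) by (intro t1_space_derived_set_of_eq_empty_if_finite_traces) auto
  moreover have "D \<subseteq> topspace ?Z"
    using D closure_of_subset_topspace by (rule order.trans)
  moreover have "countable_extent ?Z"
    using assms(1,2) by (intro countable_extent_prod_compact set_strongly_star_lindelof_imp_countable_extent)
  ultimately have "countable D"
    unfolding countable_extent_def by blast
  then show "\<exists>F. countable F \<and> F \<subseteq> ?Z closure_of A \<and> A \<subseteq> star_of F \<U>"
    using D star closure_of_subset[OF A] by blast
qed

end
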